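(* Let $H$ be a connected graph of order $a \in \mathbb{N}$. Then for every $b \in \mathbb{N}$, $R_\mathrm{ord}(H, P_b^\mathrm{mon}) = 1 + (a-1)(b-1)$.
   Context: All graphs are finite, simple and undirected, and a graph of order $n$ has vertex set $\{0,1,\ldots,n-1\}$; $K_n$ is the complete graph on $\{0,\ldots,n-1\}$. A $2$-edge-coloring of $K_n$ assigns each edge a color in $\{1,2\}$. For a graph $H$ and such a coloring, an embedding of $H$ in color $j$ is an injective map $\varphi\colon V(H)\to V(K_n)$ such that for every edge $uv$ of $H$ the edge $\{\varphi(u),\varphi(v)\}$ has color $j$; it is increasing if $\varphi(0)<\varphi(1)<\cdots<\varphi(|H|-1)$. The ordered Ramsey number $R_\mathrm{ord}(H_1,H_2)$ is the smallest $n\in\mathbb{N}$ such that every $2$-edge-coloring of $K_n$ admits an increasing embedding of $H_1$ in color $1$ or an increasing embedding of $H_2$ in color $2$. The monotone path $P_n^\mathrm{mon}$ is the graph of order $n$ in which two vertices are adjacent iff they are consecutive integers. *)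

theory Defs
  imports Main
begin

definition graph_on :: "nat \<Rightarrow> nat set set \<Rightarrow> bool" where
  "graph_on n E \<longleftrightarrow> (\<forall>e\<in>E. \<exists>u v. e = {u, v} \<and> u \<noteq> v \<and> u < n \<and> v < n)"

definition adj :: "nat set set \<Rightarrow> (nat \<times> nat) set" where
  "adj E = {(x, y). {x, y} \<in> E}"

definition connected_graph :: "nat \<Rightarrow> nat set set \<Rightarrow> bool" where
  "connected_graph n E \<longleftrightarrow> graph_on n E \<and> (\<forall>u<n. \<forall>v<n. (u, v) \<in> (adj E)\<^sup>*)"

definition two_coloring :: "nat \<Rightarrow> (nat set \<Rightarrow> nat) \<Rightarrow> bool" where
  "two_coloring n c \<longleftrightarrow> (\<forall>u<n. \<forall>v<n. u \<noteq> v \<longrightarrow> c {u, v} \<in> {1, 2})"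

text \<open>Increasing embedding of the graph (k, E) of order k into K_n in color j.
  Strict monotonicity implies injectivity.\<close>
definition incr_embedding ::
  "nat \<Rightarrow> nat set set \<Rightarrow> nat \<Rightarrow> (nat set \<Rightarrow> nat) \<Rightarrow> nat \<Rightarrow> (nat \<Rightarrow> nat) \<Rightarrow> bool" where
  "incr_embedding k E n c j \<phi> \<longleftrightarrow>
     (\<forall>i<k. \<phi> i < n) \<and> (\<forall>i i'. i < i' \<and> i' < k \<longrightarrow> \<phi> i < \<phi> i') \<and>
     (\<forall>u v. {u, v} \<in> E \<longrightarrow> c {\<phi> u, \<phi> v} = j)"

definition ord_ramsey_prop ::
  "nat \<Rightarrow> nat set set \<Rightarrow> nat \<Rightarrow> nat set set \<Rightarrow> nat \<Rightarrow> bool" where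
  "ord_ramsey_prop k1 E1 k2 E2 n \<longleftrightarrow>
     (\<forall>c. two_coloring n c \<longrightarrow>
        (\<exists>\<phi>. incr_embedding k1 E1 n c 1 \<phi>) \<or> (\<exists>\<phi>. incr_embedding k2 E2 n c 2 \<phi>))"

definition R_ord :: "nat \<Rightarrow> nat set set \<Rightarrow> nat \<Rightarrow> nat set set \<Rightarrow> nat" where
  "R_ord k1 E1 k2 E2 = (LEAST n. ord_ramsey_prop k1 E1 k2 E2 n)"

definition mon_path :: "nat \<Rightarrow> nat set set" where
  "mon_path n = {{i, i + 1} | i. i + 1 < n}"

end

theory Submission
  imports Defs "HOL-Library.FuncSet"
begin

text \<open>Upper bound: label every vertex v by the number of vertices of a longest monotone
  color-2 path ending at v. If no label reaches b, the 1 + (a-1)(b-1) vertices carry at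
  most b-1 labels, so some a of them share a label. Two vertices with the same label
  cannot be joined in colour 2, since the path ending at the smaller one would extend to
  the larger one; hence they span a color-1 clique, into which every graph of order a
  embeds increasingly.

  Lower bound: cut the vertices into consecutive blocks of size a-1 and color an edge 1
  iff it lies inside a block. A color-1 copy of the connected graph H lies in a single
  block, which is too small; a monotone color-2 path enters a new block at every step,
  so it has at most b-1 vertices.\<close>

lemma incr_prefix_ge_first:
  fixes \<phi> :: "nat \<Rightarrow> nat"
  assumes incr: "\<forall>i i'. i < i' \<and> i' < k \<longrightarrow> \<phi> i < \<phi> i'" and "i < k"
  shows "\<phi> 0 + i \<le> \<phi> i"
  using \<open>i < k\<close>
proof (induction i)
  case (Suc i)
  then have "\<phi> i < \<phi> (Suc i)" using incr by simp
  with Suc show ?case by simp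
qed simp

lemma incr_prefix_le_last:
  fixes \<phi> :: "nat \<Rightarrow> nat"
  assumes incr: "\<forall>i i'. i < i' \<and> i' < k \<longrightarrow> \<phi> i < \<phi> i'" and "i < k"
  shows "\<phi> i \<le> \<phi> (k - 1)"
  using assms by (cases "i = k - 1") (auto intro: less_imp_le)

definition color_path_to :: "(nat set \<Rightarrow> nat) \<Rightarrow> nat \<Rightarrow> nat \<Rightarrow> nat \<Rightarrow> (nat \<Rightarrow> nat) \<Rightarrow> bool" where
  "color_path_to c j k v \<phi> \<longleftrightarrow> k \<ge> 1 \<and> \<phi> (k - 1) = v \<and>
     (\<forall>i i'. i < i' \<and> i' < k \<longrightarrow> \<phi> i < \<phi> i') \<and>
     (\<forall>i. i + 1 < k \<longrightarrow> c {\<phi> i, \<phi> (i + 1)} = j)"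

definition longest_path_to :: "(nat set \<Rightarrow> nat) \<Rightarrow> nat \<Rightarrow> nat \<Rightarrow> nat" where
  "longest_path_to c j v = Max {k. \<exists>\<phi>. color_path_to c j k v \<phi>}"

lemma color_path_to_length_le:
  assumes "color_path_to c j k v \<phi>"
  shows "k \<le> v + 1"
  using assms incr_prefix_ge_first[of k \<phi> "k - 1"] unfolding color_path_to_def by auto

lemma color_path_to_le_end:
  assumes "color_path_to c j k v \<phi>" and "i < k"
  shows "\<phi> i \<le> v"
  using assms incr_prefix_le_last[of k \<phi> i] unfolding color_path_to_def by auto

lemma finite_color_path_lengths: "finite {k. \<exists>\<phi>. color_path_to c j k v \<phi>}"
  by (rule finite_subset[of _ "{..v + 1}"]) (auto dest: color_path_to_length_le)

lemma color_path_to_single: "color_path_to c j 1 v (\<lambda>_. v)"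
  unfolding color_path_to_def by auto

lemma longest_path_to_ge:
  assumes "color_path_to c j k v \<phi>"
  shows "k \<le> longest_path_to c j v"
  unfolding longest_path_to_def using assms finite_color_path_lengths by (intro Max_ge) auto

lemma longest_path_to_ge_1: "1 \<le> longest_path_to c j v"
  using longest_path_to_ge[OF color_path_to_single] .

lemma longest_path_to_attained: "\<exists>\<phi>. color_path_to c j (longest_path_to c j v) v \<phi>"
proof -
  have "longest_path_to c j v \<in> {k. \<exists>\<phi>. color_path_to c j k v \<phi>}"
    unfolding longest_path_to_def
    using finite_color_path_lengths color_path_to_single by (intro Max_in) blast+
  then show ?thesis by blast
qed

lemma color_path_to_extend:
  assumes path: "color_path_to c j k u \<phi>" and "u < v" and "c {u, v} = j"
  shows "color_path_to c j (k + 1) v (\<phi>(k := v))"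
proof -
  have "k \<ge> 1" and "\<phi> (k - 1) = u"
    using path unfolding color_path_to_def by auto
  moreover have "\<phi> i < v" if "i < k" for i
    using color_path_to_le_end[OF path that] \<open>u < v\<close> by simp
  ultimately show ?thesis
    using path assms(2,3) unfolding color_path_to_def
    by (auto simp: less_Suc_eq)
qed

lemma longest_path_to_increases:
  assumes "u < v" and "c {u, v} = j"
  shows "longest_path_to c j u + 1 \<le> longest_path_to c j v"
  using longest_path_to_attained[of c j u] color_path_to_extend assms longest_path_to_ge
  by blast

lemma incr_embedding_mon_path_of_color_path:
  assumes path: "color_path_to c j k v \<phi>" and "v < n" and "b \<le> k"
  shows "incr_embedding b (mon_path b) n c j \<phi>"
  unfolding incr_embedding_def
proof (intro conjI allI impI)
  fix i assume "i < b"
  then show "\<phi> i < n" using color_path_to_le_end[OF path, of i] assms(2,3) by simp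
next
  fix i i' assume "i < i' \<and> i' < b"
  then show "\<phi> i < \<phi> i'" using path \<open>b \<le> k\<close> unfolding color_path_to_def by auto
next
  fix u w assume "{u, w} \<in> mon_path b"
  then obtain i where "{u, w} = {i, i + 1}" and "i + 1 < b" unfolding mon_path_def by auto
  moreover have "c {\<phi> i, \<phi> (i + 1)} = j"
    using path \<open>i + 1 < b\<close> \<open>b \<le> k\<close> unfolding color_path_to_def by auto
  ultimately show "c {\<phi> u, \<phi> w} = j" by (auto simp: doubleton_eq_iff insert_commute)
qed

lemma incr_embedding_of_monochromatic_set:
  assumes H: "graph_on a H" and S: "S \<subseteq> {..<n}" "a \<le> card S"
    and mono: "\<forall>x\<in>S. \<forall>y\<in>S. x \<noteq> y \<longrightarrow> c {x, y} = j"
  shows "\<exists>\<phi>. incr_embedding a H n c j \<phi>"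
proof -
  define xs where "xs = sorted_list_of_set S"
  have "finite S" using S(1) finite_subset by blast
  then have len: "a \<le> length xs" and sorted: "sorted_wrt (<) xs" and set: "set xs = S"
    using S(2) unfolding xs_def by auto
  have in_S: "xs ! i \<in> S" if "i < a" for i
    using that len set nth_mem by fastforce
  have incr: "xs ! i < xs ! i'" if "i < i'" "i' < a" for i i'
    using that len sorted sorted_wrt_nth_less by fastforce
  have "incr_embedding a H n c j ((!) xs)"
    unfolding incr_embedding_def
  proof (intro conjI allI impI)
    fix i assume "i < a" then show "xs ! i < n" using in_S S(1) by blast
  next
    fix i i' assume "i < i' \<and> i' < a" then show "xs ! i < xs ! i'" using incr by blast
  next
    fix u w assume "{u, w} \<in> H"
    then have "u \<noteq> w" "u < a" "w < a"
      using H unfolding graph_on_def by (auto simp: doubleton_eq_iff)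
    moreover have "xs ! u \<noteq> xs ! w" if "u < w" "w < a" for u w
      using incr[OF that] by simp
    ultimately show "c {xs ! u, xs ! w} = j"
      using mono in_S by (metis linorder_neq_iff)
  qed
  then show ?thesis by blast
qed

lemma longest_path_to_eq_imp_color_1:
  assumes c: "two_coloring n c" and "x < n" "y < n" "x \<noteq> y"
    and eq: "longest_path_to c 2 x = longest_path_to c 2 y"
  shows "c {x, y} = 1"
proof (rule ccontr)
  assume "c {x, y} \<noteq> 1"
  then have "c {x, y} = 2" and "c {y, x} = 2"
    using c assms(2-4) unfolding two_coloring_def by (auto simp: insert_commute)
  then show False
    using longest_path_to_increases[of x y c 2] longest_path_to_increases[of y x c 2] eq \<open>x \<noteq> y\<close>
    by (cases "x < y") auto
qed

lemma ord_ramsey_prop_upper: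
  assumes H: "graph_on a H"
  shows "ord_ramsey_prop a H b (mon_path b) (1 + (a - 1) * (b - 1))"
  unfolding ord_ramsey_prop_def
proof (intro allI impI)
  fix c
  define n where "n = 1 + (a - 1) * (b - 1)"
  define L where "L = longest_path_to c 2"
  assume c: "two_coloring (1 + (a - 1) * (b - 1)) c"
  show "(\<exists>\<phi>. incr_embedding a H (1 + (a - 1) * (b - 1)) c 1 \<phi>) \<or>
        (\<exists>\<phi>. incr_embedding b (mon_path b) (1 + (a - 1) * (b - 1)) c 2 \<phi>)"
  proof (cases "\<exists>v<n. b \<le> L v")
    case True
    then obtain v where "v < n" "b \<le> L v" by blast
    then show ?thesis
      using longest_path_to_attained incr_embedding_mon_path_of_color_path
      unfolding L_def n_def by blast
  next
    case False
    have label: "L v \<in> {1..b - 1}" if "v < n" for v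
      using False that longest_path_to_ge_1[of c 2 v] unfolding L_def by auto
    then have labels: "L \<in> {..<n} \<rightarrow> {1..b - 1}"
      by blast
    have "{1..b - 1} \<noteq> {}"
      using label[of 0] unfolding n_def by auto
    with pigeonhole_card[OF labels] obtain t
      where "card {..<n} \<le> card (L -` {t} \<inter> {..<n}) * card {1..b - 1}"
      by auto
    then have "n \<le> card (L -` {t} \<inter> {..<n}) * (b - 1)"
      by simp
    then have big: "a \<le> card (L -` {t} \<inter> {..<n})"
      using mult_le_mono1[of "card (L -` {t} \<inter> {..<n})" "a - 1" "b - 1"] unfolding n_def
      by linarith
    have "\<forall>x\<in>L -` {t} \<inter> {..<n}. \<forall>y\<in>L -` {t} \<inter> {..<n}. x \<noteq> y \<longrightarrow> c {x, y} = 1"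
      using longest_path_to_eq_imp_color_1[OF c[folded n_def]] unfolding L_def vimage_def by simp
    then show ?thesis
      using incr_embedding_of_monochromatic_set[OF H _ big] unfolding n_def by blast
  qed
qed

definition block_coloring :: "nat \<Rightarrow> nat set \<Rightarrow> nat" where
  "block_coloring m e = (if \<forall>x\<in>e. \<forall>y\<in>e. x div m = y div m then 1 else 2)"

lemma block_coloring_pair:
  "block_coloring m {x, y} = (if x div m = y div m then 1 else 2)"
  unfolding block_coloring_def by auto

lemma two_coloring_block_coloring: "two_coloring n (block_coloring m)"
  unfolding two_coloring_def block_coloring_def by auto

lemma block_coloring_color_1_same_block:
  assumes H: "connected_graph a H" and emb: "incr_embedding a H n (block_coloring m) 1 \<phi>"
    and "u < a" "v < a"
  shows "\<phi> u div m = \<phi> v div m"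
proof -
  have "(u, v) \<in> (adj H)\<^sup>*" using H assms(3,4) unfolding connected_graph_def by blast
  then show ?thesis
  proof (induction rule: rtrancl_induct)
    case (step y z)
    then have "{y, z} \<in> H" unfolding adj_def by simp
    then have "block_coloring m {\<phi> y, \<phi> z} = 1" using emb unfolding incr_embedding_def by blast
    with step.IH show ?case by (simp add: block_coloring_pair split: if_splits)
  qed simp
qed

lemma block_coloring_no_color_1_embedding:
  assumes H: "connected_graph a H" and "0 < m" "m < a"
  shows "\<not> incr_embedding a H n (block_coloring m) 1 \<phi>"
proof
  assume emb: "incr_embedding a H n (block_coloring m) 1 \<phi>"
  have "\<phi> 0 + m \<le> \<phi> m"
    using incr_prefix_ge_first[of a \<phi> m] emb \<open>m < a\<close> unfolding incr_embedding_def by simp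
  then have "(\<phi> 0 + m) div m \<le> \<phi> m div m"
    by (rule div_le_mono)
  then have "\<phi> 0 div m + 1 \<le> \<phi> m div m"
    using \<open>0 < m\<close> by (simp add: div_add_self2)
  moreover have "\<phi> m div m = \<phi> 0 div m"
    using block_coloring_color_1_same_block[OF H emb, of m 0] \<open>m < a\<close> by simp
  ultimately show False by simp
qed

lemma block_coloring_color_2_mon_path_blocks:
  assumes emb: "incr_embedding b (mon_path b) n (block_coloring m) 2 \<phi>" and "i < b"
  shows "i \<le> \<phi> i div m"
  using \<open>i < b\<close>
proof (induction i)
  case (Suc i)
  then have "\<phi> i < \<phi> (Suc i)" using emb unfolding incr_embedding_def by simp
  then have "\<phi> i div m \<le> \<phi> (Suc i) div m" by (simp add: div_le_mono)
  moreover have "{i, i + 1} \<in> mon_path b" using Suc.prems unfolding mon_path_def by auto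
  then have "block_coloring m {\<phi> i, \<phi> (Suc i)} = 2" using emb unfolding incr_embedding_def by simp
  ultimately show ?case using Suc by (simp add: block_coloring_pair split: if_splits)
qed simp

lemma block_coloring_no_color_2_mon_path:
  assumes "0 < m" "1 \<le> b" "n \<le> m * (b - 1)"
  shows "\<not> incr_embedding b (mon_path b) n (block_coloring m) 2 \<phi>"
proof
  assume emb: "incr_embedding b (mon_path b) n (block_coloring m) 2 \<phi>"
  then have "\<phi> (b - 1) < n" using \<open>1 \<le> b\<close> unfolding incr_embedding_def by simp
  then have "\<phi> (b - 1) < m * (b - 1)" using \<open>n \<le> m * (b - 1)\<close> by linarith
  then have "\<phi> (b - 1) div m < b - 1" using \<open>0 < m\<close> by (simp add: div_less_iff_less_mult mult.commute)
  moreover have "b - 1 \<le> \<phi> (b - 1) div m"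
    using block_coloring_color_2_mon_path_blocks[OF emb] \<open>1 \<le> b\<close> by simp
  ultimately show False by simp
qed

lemma incr_embedding_into_empty:
  assumes "incr_embedding k E 0 c j \<phi>"
  shows "k = 0"
  using assms unfolding incr_embedding_def by blast

lemma not_ord_ramsey_prop_0:
  assumes "1 \<le> k1" and "1 \<le> k2"
  shows "\<not> ord_ramsey_prop k1 E1 k2 E2 0"
proof
  assume "ord_ramsey_prop k1 E1 k2 E2 0"
  moreover have "two_coloring 0 (\<lambda>_. 1)" unfolding two_coloring_def by simp
  ultimately obtain k E j \<phi> where "incr_embedding k E 0 (\<lambda>_. 1) j \<phi>" "1 \<le> k"
    using assms unfolding ord_ramsey_prop_def by blast
  then show False using incr_embedding_into_empty by fastforce
qed

lemma not_ord_ramsey_prop_below: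
  assumes "1 \<le> a" and "1 \<le> b" and H: "connected_graph a H"
    and "n \<le> (a - 1) * (b - 1)"
  shows "\<not> ord_ramsey_prop a H b (mon_path b) n"
proof (cases "a = 1")
  case True
  then show ?thesis using assms not_ord_ramsey_prop_0 by simp
next
  case False
  then have "0 < a - 1" "a - 1 < a" using \<open>1 \<le> a\<close> by auto
  then have "\<not> incr_embedding a H n (block_coloring (a - 1)) 1 \<phi>"
    and "\<not> incr_embedding b (mon_path b) n (block_coloring (a - 1)) 2 \<phi>" for \<phi>
    using block_coloring_no_color_1_embedding[OF H] block_coloring_no_color_2_mon_path assms
    by (auto simp: mult.commute)
  then show ?thesis
    using two_coloring_block_coloring unfolding ord_ramsey_prop_def by blast
qed

theorem theorem4p1:
  fixes a b :: nat and H :: "nat set set"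
  assumes "a \<ge> 1" and "b \<ge> 1"
    and "connected_graph a H"
  shows "R_ord a H b (mon_path b) = 1 + (a - 1) * (b - 1)"
  unfolding R_ord_def
proof (rule Least_equality)
  show "ord_ramsey_prop a H b (mon_path b) (1 + (a - 1) * (b - 1))"
    using ord_ramsey_prop_upper assms(3) unfolding connected_graph_def by blast
next
  fix n assume "ord_ramsey_prop a H b (mon_path b) n"
  then show "1 + (a - 1) * (b - 1) \<le> n"
    using not_ord_ramsey_prop_below[OF assms, of n] by linarith
qed

end
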